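(* Let $n\ge 1$ and $0\le k\le n-1$ be integers. The complement $\overline{S^k_{n-k}}$ of the generalized crown graph $S^k_{n-k}$ is word-representable. Explicitly: the graph with vertex set $\{1,\dots,n\}\cup\{1',\dots,n'\}$ in which $\{1,\dots,n\}$ and $\{1',\dots,n'\}$ are cliques and, for $i,j\in\{1,\dots,n\}$, $i$ is adjacent to $j'$ if and only if $j\equiv i+r \pmod n$ for some $r\in\{0,1,\dots,k\}$ (residues taken in $\{1,\dots,n\}$), is word-representable.
   Context: A graph $G=(V,E)$ is word-representable if there exists a word $w$ over the alphabet $V$, containing every letter of $V$ at least once, such that for all distinct $x,y\in V$, the letters $x$ and $y$ alternate in $w$ (i.e., the subword of $w$ obtained by deleting all letters other than $x,y$ has no two equal consecutive letters) if and only if $xy\in E$. The generalized crown graph $S^k_{n-k}$ is the bipartite graph with parts $X=\{1,\dots,n\}$ and $Y=\{1',\dots,n'\}$ obtained from the complete bipartite graph $K_{n,n}$ by deleting, for each $i\in\{1,\dots,n\}$, the edges from $i$ to $j'$ for all $j\equiv i,i+1,\dots,i+k \pmod n$ (with residues in $\{1,\dots,n\}$, i.e. $0'$ means $n'$). For $k=0$ this is the crown graph $H_{n,n}$. *)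

theory Defs
  imports Main
begin

definition alternate :: "'a list \<Rightarrow> 'a \<Rightarrow> 'a \<Rightarrow> bool" where
  "alternate w x y \<longleftrightarrow>
     (let u = filter (\<lambda>z. z = x \<or> z = y) w in
        \<forall>i. Suc i < length u \<longrightarrow> u ! i \<noteq> u ! Suc i)"

definition word_representable :: "'a set \<Rightarrow> ('a \<Rightarrow> 'a \<Rightarrow> bool) \<Rightarrow> bool" where
  "word_representable V E \<longleftrightarrow>
     (\<exists>w. set w = V \<and>
          (\<forall>x\<in>V. \<forall>y\<in>V. x \<noteq> y \<longrightarrow> (alternate w x y \<longleftrightarrow> E x y)))"

text \<open>Vertices: (i, False) is i, (i, True) is i', for i in {1..n}.\<close>
definition crown_vertices :: "nat \<Rightarrow> (nat \<times> bool) set" where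
  "crown_vertices n = {1..n} \<times> UNIV"

definition compl_gen_crown_adj :: "nat \<Rightarrow> nat \<Rightarrow> nat \<times> bool \<Rightarrow> nat \<times> bool \<Rightarrow> bool" where
  "compl_gen_crown_adj n k u v \<longleftrightarrow> u \<noteq> v \<and>
     (snd u = snd v \<or>
      (\<exists>i j. ((u = (i, False) \<and> v = (j, True)) \<or> (v = (i, False) \<and> u = (j, True))) \<and>
             (\<exists>r\<le>k. j mod n = (i + r) mod n)))"

end

theory Submission
  imports Defs "HOL-Library.Product_Lexorder"
begin

text \<open>Each vertex is written three times, once in each of three rounds. In a round the letters
  \<open>1, ..., n\<close> occupy slots \<open>1, ..., n\<close> in this order and the letter \<open>j'\<close> occupies the slot
  congruent to \<open>j + d\<close> modulo \<open>n\<close>, where \<open>d = n - k - 1\<close>; in the second and third round the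
  letters \<open>i\<close> are delayed by \<open>d\<close> slots. Two letters that occur three times each alternate iff
  their occurrences interleave. Hence each side is a clique, while \<open>i\<close> and \<open>j'\<close> alternate iff
  the slot of \<open>j'\<close> is none of the \<open>d\<close> slots cyclically following \<open>i - 1\<close>, i.e. iff
  \<open>j \<equiv> i + r (mod n)\<close> for some \<open>r \<le> k\<close>.\<close>

definition interleaved :: "(nat \<Rightarrow> 'a::order) \<Rightarrow> (nat \<Rightarrow> 'a) \<Rightarrow> bool" where
  "interleaved a b \<longleftrightarrow> a 0 < b 0 \<and> b 0 < a 1 \<and> a 1 < b 1 \<and> b 1 < a 2 \<and> a 2 < b 2"

lemma alternate_sym: "alternate w x y \<longleftrightarrow> alternate w y x"
  unfolding alternate_def by (simp add: disj_commute)

lemma filter_sorted_list_of_set: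
  assumes "finite A"
  shows "filter P (sorted_list_of_set A) = sorted_list_of_set {x\<in>A. P x}"
  using assms by (intro sorted_distinct_set_unique) (auto intro: sorted_wrt_filter)

lemma alternate_map_sorted_list_of_set_separates:
  fixes c :: "'a::linorder \<Rightarrow> 'b"
  assumes "finite E" and alt: "alternate (map c (sorted_list_of_set E)) x y"
    and "e1 \<in> E" "e2 \<in> E" "c e1 \<in> {x, y}" "c e2 = c e1" "e1 < e2"
  shows "\<exists>e\<in>E. e1 < e \<and> e < e2 \<and> c e \<in> {x, y} \<and> c e \<noteq> c e1"
proof -
  define s where "s = sorted_list_of_set {e\<in>E. c e = x \<or> c e = y}"
  have "filter (\<lambda>z. z = x \<or> z = y) (map c (sorted_list_of_set E)) = map c s"
    using assms(1) by (simp add: s_def filter_map comp_def filter_sorted_list_of_set)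
  with alt have no_repeat: "c (s ! i) \<noteq> c (s ! Suc i)" if "Suc i < length s" for i
    using that by (auto simp: alternate_def)
  have set_s: "set s = {e\<in>E. c e = x \<or> c e = y}" and sorted_s: "sorted_wrt (<) s"
    using assms(1) by (simp_all add: s_def)
  have "e1 \<in> set s" "e2 \<in> set s"
    using assms(3-6) set_s by auto
  then obtain i j where i: "i < length s" "s ! i = e1" and j: "j < length s" "s ! j = e2"
    by (metis in_set_conv_nth)
  have "i < j"
  proof (rule ccontr)
    assume "\<not> i < j"
    then have "e2 \<le> e1"
      using i j sorted_s by (metis linorder_neqE_nat order.order_iff_strict sorted_wrt_nth_less)
    then show False using \<open>e1 < e2\<close> by simp
  qed
  moreover have "Suc i \<noteq> j"
    using no_repeat[of i] i j \<open>c e2 = c e1\<close> by auto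
  ultimately have "Suc i < j" by simp
  have "e1 < s ! Suc i" "s ! Suc i < e2"
    using sorted_wrt_nth_less[OF sorted_s] i j \<open>Suc i < j\<close> by (metis lessI less_trans)+
  moreover have "s ! Suc i \<in> set s"
    using \<open>Suc i < j\<close> j by simp
  moreover have "c (s ! Suc i) \<noteq> c e1"
    using no_repeat[of i] i j \<open>Suc i < j\<close> by simp
  ultimately show ?thesis
    using set_s by blast
qed

lemma alternate_if_interleaved:
  fixes c :: "'a::linorder \<Rightarrow> 'b"
  assumes "finite E" "x \<noteq> y"
    and "{e\<in>E. c e = x} = {a 0, a 1, a 2}" "{e\<in>E. c e = y} = {b 0, b 1, b 2}"
    and "interleaved a b"
  shows "alternate (map c (sorted_list_of_set E)) x y"
proof -
  have sorted: "sorted_wrt (<) [a 0, b 0, a 1, b 1, a 2, b 2]"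
    using \<open>interleaved a b\<close> unfolding interleaved_def by (auto dest: order.strict_trans)
  have "{e\<in>E. c e = x \<or> c e = y} = set [a 0, b 0, a 1, b 1, a 2, b 2]"
    using assms(3,4) by auto
  then have "sorted_list_of_set {e\<in>E. c e = x \<or> c e = y} = [a 0, b 0, a 1, b 1, a 2, b 2]"
    using sorted by (metis sorted_list_of_set.idem_if_sorted_distinct strict_sorted_iff)
  moreover have "c (a r) = x" "c (b r) = y" if "r < 3" for r
    using assms(3,4) that by (auto simp: less_Suc_eq numeral_eq_Suc)
  ultimately have filtered:
    "filter (\<lambda>z. z = x \<or> z = y) (map c (sorted_list_of_set E)) = [x, y, x, y, x, y]"
    using assms(1) by (simp add: filter_map comp_def filter_sorted_list_of_set)
  show ?thesis
    unfolding alternate_def Let_def filtered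
  proof (intro allI impI)
    fix i assume "Suc i < length [x, y, x, y, x, y]"
    then have "i \<in> {0, 1, 2, 3, 4}" by auto
    then show "[x, y, x, y, x, y] ! i \<noteq> [x, y, x, y, x, y] ! Suc i"
      using \<open>x \<noteq> y\<close> by (elim insertE emptyE) (simp_all add: numeral_eq_Suc)
  qed
qed

lemma interleaved_if_separated:
  fixes a b :: "nat \<Rightarrow> 'a::linorder"
  assumes "a 0 < b 0" "a 0 < a 1" "a 1 < a 2" "b 0 < b 1" "b 1 < b 2"
    and "\<exists>e\<in>{b 0, b 1, b 2}. a 0 < e \<and> e < a 1" "\<exists>e\<in>{b 0, b 1, b 2}. a 1 < e \<and> e < a 2"
    and "\<exists>e\<in>{a 0, a 1, a 2}. b 0 < e \<and> e < b 1" "\<exists>e\<in>{a 0, a 1, a 2}. b 1 < e \<and> e < b 2"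
  shows "interleaved a b"
proof -
  have "b 0 < a 1" using assms(4,5,6) by (auto dest: order.strict_trans)
  moreover have "a 1 < b 1" using assms(1,3,8) by (auto dest: order.strict_trans)
  moreover have "b 1 < a 2" using \<open>b 0 < a 1\<close> assms(5,7) by (auto dest: order.strict_trans)
  moreover have "a 2 < b 2" using \<open>a 1 < b 1\<close> assms(1,4,9) by (auto dest: order.strict_trans)
  ultimately show ?thesis using assms(1) unfolding interleaved_def by blast
qed

lemma alternate_three_occurrences_iff:
  fixes c :: "'a::linorder \<Rightarrow> 'b"
  assumes "finite E" "x \<noteq> y"
    and a: "{e\<in>E. c e = x} = {a 0, a 1, a 2}" "a 0 < a 1" "a 1 < a 2"
    and b: "{e\<in>E. c e = y} = {b 0, b 1, b 2}" "b 0 < b 1" "b 1 < b 2"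
  shows "alternate (map c (sorted_list_of_set E)) x y \<longleftrightarrow> interleaved a b \<or> interleaved b a"
proof
  assume alt: "alternate (map c (sorted_list_of_set E)) x y"
  have between: "\<exists>e\<in>{g 0, g 1, g 2}. e1 < e \<and> e < e2"
    if ordered: "e1 \<in> {e\<in>E. c e = u}" "e2 \<in> {e\<in>E. c e = u}" "e1 < e2"
      and g: "{e\<in>E. c e = v} = {g 0, g 1, g 2}" and uv: "{u, v} = {x, y}" "u \<noteq> v"
    for e1 e2 u v and g :: "nat \<Rightarrow> 'a"
  proof -
    have alt_uv: "alternate (map c (sorted_list_of_set E)) u v"
      using alt uv alternate_sym by (metis doubleton_eq_iff)
    have "e1 \<in> E" "e2 \<in> E" "c e1 = u" "c e2 = u"
      using ordered(1,2) by simp_all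
    with alternate_map_sorted_list_of_set_separates[OF \<open>finite E\<close> alt_uv, of e1 e2]
    obtain e where "e \<in> E" "e1 < e" "e < e2" "c e \<in> {u, v}" "c e \<noteq> u"
      using \<open>e1 < e2\<close> by auto
    moreover from this uv have "c e = v" by blast
    ultimately show ?thesis using g by blast
  qed
  have a_mem: "a 0 \<in> {e\<in>E. c e = x}" "a 1 \<in> {e\<in>E. c e = x}" "a 2 \<in> {e\<in>E. c e = x}"
    unfolding a(1) by simp_all
  have b_mem: "b 0 \<in> {e\<in>E. c e = y}" "b 1 \<in> {e\<in>E. c e = y}" "b 2 \<in> {e\<in>E. c e = y}"
    unfolding b(1) by simp_all
  have yx: "{y, x} = {x, y}" by blast
  note sep_a = between[OF a_mem(1,2) a(2) b(1) refl \<open>x \<noteq> y\<close>]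
    between[OF a_mem(2,3) a(3) b(1) refl \<open>x \<noteq> y\<close>]
  note sep_b = between[OF b_mem(1,2) b(2) a(1) yx \<open>x \<noteq> y\<close>[symmetric]]
    between[OF b_mem(2,3) b(3) a(1) yx \<open>x \<noteq> y\<close>[symmetric]]
  have "a 0 \<noteq> b 0" using a_mem(1) b_mem(1) \<open>x \<noteq> y\<close> by auto
  then consider "a 0 < b 0" | "b 0 < a 0" by fastforce
  then show "interleaved a b \<or> interleaved b a"
  proof cases
    case 1
    from interleaved_if_separated[OF 1 a(2,3) b(2,3) sep_a sep_b] show ?thesis ..
  next
    case 2
    from interleaved_if_separated[OF 2 b(2,3) a(2,3) sep_b sep_a] show ?thesis ..
  qed
next
  assume "interleaved a b \<or> interleaved b a"
  then show "alternate (map c (sorted_list_of_set E)) x y"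
  proof
    assume "interleaved a b"
    then show ?thesis by (rule alternate_if_interleaved[OF \<open>finite E\<close> \<open>x \<noteq> y\<close> a(1) b(1)])
  next
    assume "interleaved b a"
    then have "alternate (map c (sorted_list_of_set E)) y x"
      by (rule alternate_if_interleaved[OF \<open>finite E\<close> \<open>x \<noteq> y\<close>[symmetric] b(1) a(1)])
    then show ?thesis by (subst alternate_sym)
  qed
qed

definition y_slot :: "nat \<Rightarrow> nat \<Rightarrow> nat \<Rightarrow> nat" where
  "y_slot n d j = (if j + d \<le> n then j + d else j + d - n)"

lemma y_slot_bounds:
  assumes "d < n" "j \<in> {1..n}"
  shows "y_slot n d j \<in> {1..n}"
  using assms by (auto simp: y_slot_def)

lemma y_slot_inj:
  assumes "j \<in> {1..n}" "j' \<in> {1..n}" "y_slot n d j = y_slot n d j'"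
  shows "j = j'"
  using assms by (auto simp: y_slot_def split: if_splits)

text \<open>Times of \<open>X\<close>-letters are even and
  those of \<open>Y\<close>-letters odd, so that \<open>i\<close> precedes \<open>j'\<close> exactly when its (possibly delayed)
  slot is at most that of \<open>j'\<close>.\<close>

definition occurrence_time :: "nat \<Rightarrow> nat \<Rightarrow> nat \<times> bool \<Rightarrow> nat \<Rightarrow> nat" where
  "occurrence_time n d v r =
     (if snd v then 2 * (r * n + y_slot n d (fst v)) + 1
      else 2 * (r * n + fst v + (if r = 0 then 0 else d)))"

definition crown_events :: "nat \<Rightarrow> nat \<Rightarrow> (nat \<times> (nat \<times> bool)) set" where
  "crown_events n d = {(occurrence_time n d v r, v) | v r. v \<in> crown_vertices n \<and> r < 3}"

definition crown_word :: "nat \<Rightarrow> nat \<Rightarrow> (nat \<times> bool) list" where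
  "crown_word n d = map snd (sorted_list_of_set (crown_events n d))"

lemma finite_crown_events: "finite (crown_events n d)"
  unfolding crown_events_def crown_vertices_def by (rule finite_image_set2) auto

lemma set_crown_word: "set (crown_word n d) = crown_vertices n"
proof -
  have "snd ` crown_events n d = crown_vertices n"
    unfolding crown_events_def by (auto simp: image_iff) (metis zero_less_numeral)
  then show ?thesis unfolding crown_word_def by (simp add: finite_crown_events)
qed

lemma crown_events_of_vertex:
  assumes "v \<in> crown_vertices n"
  shows "{e \<in> crown_events n d. snd e = v} =
    {(occurrence_time n d v 0, v), (occurrence_time n d v 1, v), (occurrence_time n d v 2, v)}"
proof -
  have "{e \<in> crown_events n d. snd e = v} = (\<lambda>r. (occurrence_time n d v r, v)) ` {r. r < 3}"
    using assms unfolding crown_events_def by force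
  moreover have "{r. r < (3::nat)} = {0, 1, 2}" by auto
  ultimately show ?thesis by simp
qed

lemma occurrence_time_strict_mono:
  assumes "0 < n" "r < r'"
  shows "occurrence_time n d v r < occurrence_time n d v r'"
proof -
  have "r * n < r' * n" using assms by simp
  then show ?thesis by (auto simp: occurrence_time_def)
qed

lemma alternate_crown_word_iff:
  assumes "0 < n" "u \<in> crown_vertices n" "v \<in> crown_vertices n" "u \<noteq> v"
  shows "alternate (crown_word n d) u v \<longleftrightarrow>
    interleaved (\<lambda>r. (occurrence_time n d u r, u)) (\<lambda>r. (occurrence_time n d v r, v)) \<or>
    interleaved (\<lambda>r. (occurrence_time n d v r, v)) (\<lambda>r. (occurrence_time n d u r, u))"
  unfolding crown_word_def
  by (rule alternate_three_occurrences_iff[OF finite_crown_events \<open>u \<noteq> v\<close>])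
    (simp_all add: crown_events_of_vertex assms less_prod_def occurrence_time_strict_mono)

lemma alternate_crown_word_X_X:
  assumes "0 < n" "i \<in> {1..n}" "i' \<in> {1..n}" "i \<noteq> i'"
  shows "alternate (crown_word n d) (i, False) (i', False)"
proof -
  have "i < i' \<or> i' < i" using assms(4) by linarith
  then have "interleaved (\<lambda>r. (occurrence_time n d (i, False) r, (i, False)))
                         (\<lambda>r. (occurrence_time n d (i', False) r, (i', False))) \<or>
             interleaved (\<lambda>r. (occurrence_time n d (i', False) r, (i', False)))
                         (\<lambda>r. (occurrence_time n d (i, False) r, (i, False)))"
    using assms by (elim disjE) (auto simp: interleaved_def less_prod_def occurrence_time_def)
  then show ?thesis
    using assms by (subst alternate_crown_word_iff) (auto simp: crown_vertices_def)
qed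

lemma alternate_crown_word_Y_Y:
  assumes "0 < n" "d < n" "j \<in> {1..n}" "j' \<in> {1..n}" "j \<noteq> j'"
  shows "alternate (crown_word n d) (j, True) (j', True)"
proof -
  have "y_slot n d j \<in> {1..n}" "y_slot n d j' \<in> {1..n}"
    using y_slot_bounds assms(2-4) by blast+
  moreover have "y_slot n d j < y_slot n d j' \<or> y_slot n d j' < y_slot n d j"
    using y_slot_inj[OF assms(3,4)] assms(5) by (metis linorder_neqE_nat)
  ultimately have "interleaved (\<lambda>r. (occurrence_time n d (j, True) r, (j, True)))
                                (\<lambda>r. (occurrence_time n d (j', True) r, (j', True))) \<or>
                    interleaved (\<lambda>r. (occurrence_time n d (j', True) r, (j', True)))
                                (\<lambda>r. (occurrence_time n d (j, True) r, (j, True)))"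
    by (elim disjE) (auto simp: interleaved_def less_prod_def occurrence_time_def)
  then show ?thesis
    using assms by (subst alternate_crown_word_iff) (auto simp: crown_vertices_def)
qed

lemma alternate_crown_word_X_Y_iff:
  assumes "0 < n" "d < n" "i \<in> {1..n}" "j \<in> {1..n}"
  shows "alternate (crown_word n d) (i, False) (j, True) \<longleftrightarrow>
    i + d \<le> y_slot n d j \<or> (y_slot n d j < i \<and> i + d \<le> y_slot n d j + n)"
proof -
  have "y_slot n d j \<in> {1..n}"
    using y_slot_bounds assms(2,4) by blast
  then show ?thesis
    using assms by (subst alternate_crown_word_iff)
      (auto simp: crown_vertices_def interleaved_def less_prod_def occurrence_time_def)
qed

lemma mod_eq_shift_iff:
  fixes i j n r :: nat
  assumes "i \<in> {1..n}" "j \<in> {1..n}" "r < n"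
  shows "j mod n = (i + r) mod n \<longleftrightarrow> j = i + r \<or> j + n = i + r"
proof -
  have "j mod n = (if j = n then 0 else j)"
    using assms(2) by auto
  moreover have "(i + r) mod n = (if i + r < n then i + r else i + r - n)"
    using assms by (auto simp: le_mod_geq)
  ultimately show ?thesis
    using assms by auto
qed

lemma cyclic_window_iff:
  fixes i j k n :: nat
  assumes "k < n" "i \<in> {1..n}" "j \<in> {1..n}"
  shows "(\<exists>r\<le>k. j mod n = (i + r) mod n) \<longleftrightarrow> i \<le> j \<and> j \<le> i + k \<or> j + n \<le> i + k"
proof -
  have "\<forall>r\<le>k. j mod n = (i + r) mod n \<longleftrightarrow> j = i + r \<or> j + n = i + r"
    using mod_eq_shift_iff[OF assms(2,3)] assms(1) by simp
  then have "(\<exists>r\<le>k. j mod n = (i + r) mod n) \<longleftrightarrow> (\<exists>r\<le>k. j = i + r \<or> j + n = i + r)"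
    by blast
  also have "\<dots> \<longleftrightarrow> i \<le> j \<and> j \<le> i + k \<or> j + n \<le> i + k"
    using assms(2) atLeastAtMost_iff[of i 1 n] by presburger
  finally show ?thesis .
qed

lemma alternate_crown_word_X_Y_iff_adjacent:
  assumes "0 < n" "k < n" "i \<in> {1..n}" "j \<in> {1..n}"
  shows "alternate (crown_word n (n - k - 1)) (i, False) (j, True) \<longleftrightarrow>
    compl_gen_crown_adj n k (i, False) (j, True)"
proof -
  have "compl_gen_crown_adj n k (i, False) (j, True) \<longleftrightarrow> (\<exists>r\<le>k. j mod n = (i + r) mod n)"
    by (auto simp: compl_gen_crown_adj_def)
  also have "\<dots> \<longleftrightarrow> i \<le> j \<and> j \<le> i + k \<or> j + n \<le> i + k"
    using assms by (simp add: cyclic_window_iff)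
  also have "\<dots> \<longleftrightarrow> alternate (crown_word n (n - k - 1)) (i, False) (j, True)"
    using assms by (auto simp: alternate_crown_word_X_Y_iff y_slot_def)
  finally show ?thesis ..
qed

lemma alternate_crown_word_iff_adjacent:
  assumes "0 < n" "k < n" "u \<in> crown_vertices n" "v \<in> crown_vertices n" "u \<noteq> v"
  shows "alternate (crown_word n (n - k - 1)) u v \<longleftrightarrow> compl_gen_crown_adj n k u v"
proof -
  define d where "d = n - k - 1"
  have "d < n" using assms(1) by (simp add: d_def)
  obtain i a j b where uv: "u = (i, a)" "v = (j, b)" and ij: "i \<in> {1..n}" "j \<in> {1..n}"
    using assms(3,4) by (auto simp: crown_vertices_def)
  have adj_sym: "compl_gen_crown_adj n k u v \<longleftrightarrow> compl_gen_crown_adj n k v u"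
    unfolding compl_gen_crown_adj_def by blast
  consider (X_X) "\<not> a" "\<not> b" | (Y_Y) a b | (X_Y) "\<not> a" b | (Y_X) a "\<not> b" by blast
  then show ?thesis
  proof cases
    case X_X
    then have "i \<noteq> j" using assms(5) uv by simp
    with alternate_crown_word_X_X[OF assms(1) ij] show ?thesis
      using uv X_X by (simp add: d_def compl_gen_crown_adj_def)
  next
    case Y_Y
    then have "i \<noteq> j" using assms(5) uv by simp
    with alternate_crown_word_Y_Y[OF assms(1) \<open>d < n\<close> ij] show ?thesis
      using uv Y_Y by (simp add: d_def compl_gen_crown_adj_def)
  next
    case X_Y
    then show ?thesis using alternate_crown_word_X_Y_iff_adjacent[OF assms(1,2) ij] uv by simp
  next
    case Y_X
    then have "alternate (crown_word n (n - k - 1)) v u \<longleftrightarrow> compl_gen_crown_adj n k v u"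
      using alternate_crown_word_X_Y_iff_adjacent[OF assms(1,2) ij(2,1)] uv by simp
    then show ?thesis using alternate_sym adj_sym by metis
  qed
qed

theorem mainTheorem5:
  fixes n k :: nat
  assumes "n \<ge> 1" and "k \<le> n - 1"
  shows "word_representable (crown_vertices n) (compl_gen_crown_adj n k)"
proof -
  have "0 < n" "k < n" using assms by auto
  then show ?thesis
    unfolding word_representable_def
    using set_crown_word alternate_crown_word_iff_adjacent by blast
qed

end
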